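(* Let $\mathcal{M}_{\hat A'\hat B'\to\hat A\hat B}$ be a bipartite quantum channel and $\Theta^{\mathrm{PPT}}$ a completely-PPT-preserving superchannel, $\Theta^{\mathrm{PPT}}(\mathcal{M})=\mathcal{P}^{\mathrm{post}}_{A_M\hat A\hat BB_M\to AB}\circ\mathcal{M}\circ\mathcal{P}^{\mathrm{pre}}_{A'B'\to\hat A'\hat B'A_MB_M}$ with $\mathcal{P}^{\mathrm{pre}},\mathcal{P}^{\mathrm{post}}$ completely PPT-preserving channels. Then $$E_\kappa(\mathcal{M})\ge E_\kappa(\Theta^{\mathrm{PPT}}(\mathcal{M})).$$
   Context: $T_X$ is partial transpose on $X$. For a bipartite channel $\mathcal{N}_{A'B'\to AB}$ (Alice: $A',A$; Bob: $B',B$), its Choi operator is $J^{\mathcal{N}}_{L_AABL_B}=\mathcal{N}(|\Upsilon\rangle\langle\Upsilon|_{L_AA'}\otimes|\Upsilon\rangle\langle\Upsilon|_{B'L_B})$ with $|\Upsilon\rangle_{XY}=\sum_i|i\rangle_X|i\rangle_Y$, $L_A\simeq A'$, $L_B\simeq B'$. The $\kappa$-entanglement of $\mathcal{N}$ is $E_\kappa(\mathcal{N})=\log\Gamma_\kappa(\mathcal{N})$, where $\Gamma_\kappa(\mathcal{N})=\inf\{\|\operatorname{Tr}_{AB}Q_{L_AABL_B}\|_\infty: Q_{L_AABL_B}\ge0,\ -T_{BL_B}(Q_{L_AABL_B})\le T_{BL_B}(J^{\mathcal{N}}_{L_AABL_B})\le T_{BL_B}(Q_{L_AABL_B})\}$.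 A bipartite channel is completely PPT-preserving if conjugating it with partial transposes on Bob's input and output systems gives a completely positive map. In the superchannel, Alice holds $A',\hat A',A_M,\hat A,A$; Bob holds $B',\hat B',B_M,\hat B,B$. *)

theory Defs
  imports Complex_Main
begin

text \<open>Finite-dimensional quantum systems are modelled by finite index types.
  An operator on the Hilbert space with orthonormal basis indexed by 'i is a
  matrix 'i \<Rightarrow> 'i \<Rightarrow> complex.  Composite systems are product types
  (tensor product), so a bipartite operator on A \<otimes> B has index type 'a \<times> 'b.\<close>

type_synonym 'i op = "'i \<Rightarrow> 'i \<Rightarrow> complex"

definition trace_op :: "('i::finite) op \<Rightarrow> complex" where
  "trace_op X = (\<Sum>i\<in>UNIV. X i i)"

definition psd :: "('i::finite) op \<Rightarrow> bool" where
  "psd X \<longleftrightarrow> (\<forall>v :: 'i \<Rightarrow> complex.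
      Im (\<Sum>i\<in>UNIV. \<Sum>j\<in>UNIV. cnj (v i) * X i j * v j) = 0 \<and>
      Re (\<Sum>i\<in>UNIV. \<Sum>j\<in>UNIV. cnj (v i) * X i j * v j) \<ge> 0)"

definition op_le :: "('i::finite) op \<Rightarrow> 'i op \<Rightarrow> bool" where
  "op_le X Y \<longleftrightarrow> psd (\<lambda>i j. Y i j - X i j)"

definition op_uminus :: "'i op \<Rightarrow> 'i op" where
  "op_uminus X = (\<lambda>i j. - X i j)"

definition vec_norm :: "(('i::finite) \<Rightarrow> complex) \<Rightarrow> real" where
  "vec_norm v = sqrt (\<Sum>i\<in>UNIV. (cmod (v i))\<^sup>2)"

definition op_apply :: "('i::finite) op \<Rightarrow> ('i \<Rightarrow> complex) \<Rightarrow> ('i \<Rightarrow> complex)" where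
  "op_apply X v = (\<lambda>i. \<Sum>j\<in>UNIV. X i j * v j)"

definition op_norm_inf :: "('i::finite) op \<Rightarrow> real" where
  "op_norm_inf X = Sup {vec_norm (op_apply X v) | v. vec_norm v \<le> 1}"

definition ptrans2 :: "('x \<times> 'y) op \<Rightarrow> ('x \<times> 'y) op" where
  "ptrans2 X = (\<lambda>(x,y) (x',y'). X (x,y') (x',y))"

definition lin_map :: "('i op \<Rightarrow> 'o op) \<Rightarrow> bool" where
  "lin_map N \<longleftrightarrow>
     (\<forall>X Y. N (\<lambda>i j. X i j + Y i j) = (\<lambda>p q. N X p q + N Y p q)) \<and>
     (\<forall>c X. N (\<lambda>i j. c * X i j) = (\<lambda>p q. c * N X p q))"

text \<open>N \<otimes> id_R for a reference system R (block-wise application of N).\<close>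
definition ext_id :: "('i op \<Rightarrow> 'o op) \<Rightarrow> ('i \<times> 'r) op \<Rightarrow> ('o \<times> 'r) op" where
  "ext_id N X = (\<lambda>(p,r) (q,r'). N (\<lambda>i i'. X (i,r) (i',r')) p q)"

text \<open>Complete positivity: N \<otimes> id_R is positive, with R a copy of the input
  system (equivalent to positivity for all reference dimensions).\<close>
definition compl_pos :: "(('i::finite) op \<Rightarrow> ('o::finite) op) \<Rightarrow> bool" where
  "compl_pos N \<longleftrightarrow> (\<forall>X :: ('i \<times> 'i) op. psd X \<longrightarrow> psd (ext_id N X))"

definition trace_pres :: "(('i::finite) op \<Rightarrow> ('o::finite) op) \<Rightarrow> bool" where
  "trace_pres N \<longleftrightarrow> (\<forall>X. trace_op (N X) = trace_op X)"

definition qchannel :: "(('i::finite) op \<Rightarrow> ('o::finite) op) \<Rightarrow> bool" where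
  "qchannel N \<longleftrightarrow> lin_map N \<and> compl_pos N \<and> trace_pres N"

definition cppt_pres ::
  "((('ai::finite) \<times> ('bi::finite)) op \<Rightarrow> (('ao::finite) \<times> ('bo::finite)) op) \<Rightarrow> bool" where
  "cppt_pres N \<longleftrightarrow> qchannel N \<and> compl_pos (\<lambda>X. ptrans2 (N (ptrans2 X)))"

text \<open>Choi operator J_{L_A A B L_B} of a bipartite channel N_{A'B' \<rightarrow> AB},
  with L_A \<simeq> A', L_B \<simeq> B'; index ((l_A, a), (b, l_B)).\<close>
definition choi_bip ::
  "(('ai \<times> 'bi) op \<Rightarrow> ('ao \<times> 'bo) op) \<Rightarrow> (('ai \<times> 'ao) \<times> ('bo \<times> 'bi)) op" where
  "choi_bip N = (\<lambda>((l,a),(b,m)) ((l',a'),(b',m')).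
      N (\<lambda>(x,y) (x',y'). (if x = l \<and> x' = l' \<and> y = m \<and> y' = m' then 1 else 0))
        (a,b) (a',b'))"

definition ptrace_AB ::
  "((('la::finite) \<times> ('a::finite)) \<times> (('b::finite) \<times> ('lb::finite))) op \<Rightarrow> ('la \<times> 'lb) op" where
  "ptrace_AB Q = (\<lambda>(l,m) (l',m'). \<Sum>a\<in>UNIV. \<Sum>b\<in>UNIV. Q ((l,a),(b,m)) ((l',a),(b,m')))"

definition Gamma_kappa ::
  "((('ai::finite) \<times> ('bi::finite)) op \<Rightarrow> (('ao::finite) \<times> ('bo::finite)) op) \<Rightarrow> real" where
  "Gamma_kappa N = Inf {op_norm_inf (ptrace_AB Q) | Q.
      psd Q \<and>
      op_le (op_uminus (ptrans2 Q)) (ptrans2 (choi_bip N)) \<and>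
      op_le (ptrans2 (choi_bip N)) (ptrans2 Q)}"

definition E_kappa ::
  "((('ai::finite) \<times> ('bi::finite)) op \<Rightarrow> (('ao::finite) \<times> ('bo::finite)) op) \<Rightarrow> real" where
  "E_kappa N = log 2 (Gamma_kappa N)"

definition mid_ext ::
  "(('ahi \<times> 'bhi) op \<Rightarrow> ('aho \<times> 'bho) op) \<Rightarrow>
   (('ahi \<times> 'am) \<times> ('bhi \<times> 'bm)) op \<Rightarrow> (('am \<times> 'aho) \<times> ('bho \<times> 'bm)) op" where
  "mid_ext M X = (\<lambda>((m,h),(g,n)) ((m',h'),(g',n')).
      M (\<lambda>(x,y) (x',y'). X ((x,m),(y,n)) ((x',m'),(y',n'))) (h,g) (h',g'))"

definition superch ::
  "(('ai \<times> 'bi) op \<Rightarrow> (('ahi \<times> 'am) \<times> ('bhi \<times> 'bm)) op) \<Rightarrow>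
   ((('am \<times> 'aho) \<times> ('bho \<times> 'bm)) op \<Rightarrow> ('ao \<times> 'bo) op) \<Rightarrow>
   (('ahi \<times> 'bhi) op \<Rightarrow> ('aho \<times> 'bho) op) \<Rightarrow> (('ai \<times> 'bi) op \<Rightarrow> ('ao \<times> 'bo) op)" where
  "superch Ppre Ppost M = (\<lambda>X. Ppost (mid_ext M (Ppre X)))"

end

theory Submission
  imports Defs "HOL-Library.Complex_Order"
begin

text \<open>Let \<open>J\<close> be the Choi operator of \<open>M\<close>, so that \<open>M\<close> is the map \<open>N\<^sub>J\<close> with Choi
  operator \<open>J\<close>. Then the Choi operator of \<open>\<Theta>(M)\<close> is \<open>\<Theta>'(J)\<close>, where \<open>\<Theta>'(R)\<close> is the
  Choi operator of \<open>P\<^sub>p\<^sub>o\<^sub>s\<^sub>t \<circ> (N\<^sub>R \<otimes> id) \<circ> P\<^sub>p\<^sub>r\<^sub>e\<close>. The map \<open>\<Theta>'\<close> is linear and, as both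
  \<open>P\<close>'s are completely positive, positive. Conjugating by Bob's partial transposes turns
  \<open>\<Theta>'\<close> into the same construction built from \<open>T \<circ> P \<circ> T\<close>, which are completely positive
  too; so \<open>\<Theta>'\<close> also preserves positivity of partial transposes and maps every feasible
  \<open>Q\<close> of the program for \<open>\<Gamma>\<^sub>\<kappa>(M)\<close> to a feasible point \<open>\<Theta>'(Q)\<close> for \<open>\<Theta>(M)\<close>.

  The objective does not increase: as \<open>P\<^sub>p\<^sub>o\<^sub>s\<^sub>t\<close> is trace preserving,
  \<open>\<langle>w| Tr\<^sub>A\<^sub>B \<Theta>'(Q) |w\<rangle> = \<Sum>\<^sub>m\<^sub>n tr (Z\<^sub>m\<^sub>n Tr\<^sub>A\<^sub>B Q)\<close> for the diagonal memory blocks \<open>Z\<^sub>m\<^sub>n\<close>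
  of \<open>Z = P\<^sub>p\<^sub>r\<^sub>e(|w\<rangle>\<langle>w|\<^sup>T)\<close>, which lies between \<open>0\<close> and
  \<open>\<parallel>Tr\<^sub>A\<^sub>B Q\<parallel> tr Z = \<parallel>Tr\<^sub>A\<^sub>B Q\<parallel> \<parallel>w\<parallel>\<^sup>2\<close>. Finally both infima are over nonempty sets
  bounded below by \<open>1\<close> (trace preservation), so taking logarithms is monotone.\<close>

section \<open>Sesquilinear forms and positive semidefinite operators\<close>

definition sesq_form :: "('i::finite) op \<Rightarrow> ('i \<Rightarrow> complex) \<Rightarrow> ('i \<Rightarrow> complex) \<Rightarrow> complex" where
  "sesq_form X x y = (\<Sum>i\<in>UNIV. \<Sum>j\<in>UNIV. cnj (x i) * X i j * y j)"

definition hermitian :: "('i::finite) op \<Rightarrow> bool" where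
  "hermitian X \<longleftrightarrow> (\<forall>i j. X j i = cnj (X i j))"

definition basis_vec :: "'i \<Rightarrow> 'i \<Rightarrow> complex" where
  "basis_vec k = (\<lambda>i. if i = k then 1 else 0)"

definition vec_norm2 :: "(('i::finite) \<Rightarrow> complex) \<Rightarrow> real" where
  "vec_norm2 v = (\<Sum>i\<in>UNIV. (cmod (v i))\<^sup>2)"

definition id_op :: "('i::finite) op" where
  "id_op = (\<lambda>i j. if i = j then 1 else 0)"

lemma if_zero_simps [simp]:
  "cnj (if P then x else 0) = (if P then cnj x else 0)"
  "(if P then x else 0) * (y::complex) = (if P then x * y else 0)"
  "(y::complex) * (if P then x else 0) = (if P then y * x else 0)"
  "(\<Sum>j\<in>A. if P then f j else 0) = (if P then sum f A else 0)"
  by simp_all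

lemma psd_iff_sesq_form_nonneg: "psd X \<longleftrightarrow> (\<forall>v. 0 \<le> sesq_form X v v)"
  by (auto simp: psd_def sesq_form_def less_eq_complex_def)

lemma psd_sesq_form_nonneg: "psd X \<Longrightarrow> 0 \<le> sesq_form X v v"
  by (simp add: psd_iff_sesq_form_nonneg)

lemma psd_sesq_form_real:
  assumes "psd X"
  shows "Im (sesq_form X v v) = 0" "Re (sesq_form X v v) \<ge> 0"
  using psd_sesq_form_nonneg[OF assms, of v] by (simp_all add: less_eq_complex_def)

lemma sesq_form_basis_vec_left: "sesq_form X (basis_vec i) y = (\<Sum>j\<in>UNIV. X i j * y j)"
  by (simp add: sesq_form_def basis_vec_def)

lemma sesq_form_basis_vec [simp]: "sesq_form X (basis_vec i) (basis_vec j) = X i j"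
  by (simp add: sesq_form_basis_vec_left) (simp add: basis_vec_def)

lemma sesq_form_add_scaled:
  "sesq_form X (\<lambda>i. x i + t * y i) (\<lambda>i. x i + t * y i) =
     sesq_form X x x + t * sesq_form X x y + cnj t * sesq_form X y x + t * cnj t * sesq_form X y y"
  unfolding sesq_form_def by (simp add: algebra_simps sum.distrib sum_distrib_left)

lemma sesq_form_add: "sesq_form (\<lambda>i j. X i j + Y i j) v v = sesq_form X v v + sesq_form Y v v"
  unfolding sesq_form_def by (simp add: algebra_simps sum.distrib)

lemma sesq_form_diff: "sesq_form (\<lambda>i j. X i j - Y i j) v v = sesq_form X v v - sesq_form Y v v"
  unfolding sesq_form_def by (simp add: algebra_simps sum_subtractf)

lemma sesq_form_scale: "sesq_form (\<lambda>i j. c * X i j) v w = c * sesq_form X v w"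
  unfolding sesq_form_def by (simp add: sum_distrib_left algebra_simps)

lemma sesq_form_sum: "sesq_form (\<lambda>i j. \<Sum>k\<in>K. X k i j) v v = (\<Sum>k\<in>K. sesq_form (X k) v v)"
  unfolding sesq_form_def
  by (simp add: sum_distrib_left sum_distrib_right sum.swap[of _ K] algebra_simps)

lemma sesq_form_op_apply: "sesq_form X x y = (\<Sum>i\<in>UNIV. cnj (x i) * op_apply X y i)"
  unfolding sesq_form_def op_apply_def by (simp add: sum_distrib_left mult.assoc)

lemma sesq_form_id_op: "sesq_form id_op x y = (\<Sum>i\<in>UNIV. cnj (x i) * y i)"
  unfolding sesq_form_def id_op_def by simp

lemma cnj_mult_self: "cnj z * z = complex_of_real ((cmod z)\<^sup>2)"
  using complex_norm_square[of z] by (simp add: mult.commute)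

lemma sesq_form_id_op_self: "sesq_form id_op v v = complex_of_real (vec_norm2 v)"
  unfolding sesq_form_id_op vec_norm2_def cnj_mult_self by simp

lemma hermitian_sesq_form_swap:
  assumes "hermitian X"
  shows "sesq_form X y x = cnj (sesq_form X x y)"
proof -
  have X: "cnj (X i j) = X j i" for i j
    using assms unfolding hermitian_def by (metis complex_cnj_cnj)
  have "cnj (sesq_form X x y) = (\<Sum>i\<in>UNIV. \<Sum>j\<in>UNIV. x i * X j i * cnj (y j))"
    unfolding sesq_form_def cnj_sum by (simp add: X)
  also have "\<dots> = (\<Sum>j\<in>UNIV. \<Sum>i\<in>UNIV. x i * X j i * cnj (y j))"
    by (rule sum.swap)
  also have "\<dots> = sesq_form X y x"
    unfolding sesq_form_def by (simp add: mult_ac)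
  finally show ?thesis by simp
qed

lemma hermitian_sesq_form_real: "hermitian X \<Longrightarrow> Im (sesq_form X v v) = 0"
  using hermitian_sesq_form_swap[of X v v] by (simp add: complex_eq_iff)

lemma psd_imp_hermitian:
  assumes "psd X"
  shows "hermitian X"
  unfolding hermitian_def
proof (intro allI)
  fix i j
  have diag: "Im (X k k) = 0" for k
    using psd_sesq_form_real(1)[OF assms, of "basis_vec k"] by simp
  have "Im (X i i + t * X i j + cnj t * X j i + t * cnj t * X j j) = 0" for t
    using psd_sesq_form_real(1)[OF assms, of "\<lambda>k. basis_vec i k + t * basis_vec j k"]
    by (simp add: sesq_form_add_scaled)
  from this[of 1] this[of \<i>] show "X j i = cnj (X i j)"
    using diag[of i] diag[of j] by (simp add: complex_eq_iff)
qed

lemma psd_sesq_form_swap: "psd X \<Longrightarrow> sesq_form X y x = cnj (sesq_form X x y)"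
  by (rule hermitian_sesq_form_swap[OF psd_imp_hermitian])

lemma nonneg_quadratic_imp_le:
  fixes a b k :: real
  assumes q: "\<And>s. 0 \<le> a - 2 * s * k + s\<^sup>2 * k * b" and "b \<ge> 0" "k \<ge> 0"
  shows "k \<le> a * b"
proof (cases "k = 0")
  case True
  then show ?thesis using q[of 0] \<open>b \<ge> 0\<close> by simp
next
  case False
  show ?thesis
  proof (cases "b = 0")
    case True
    have "0 \<le> a - 2 * ((a + 1) / (2 * k)) * k" using q[of "(a + 1) / (2 * k)"] True by simp
    with \<open>k \<noteq> 0\<close> show ?thesis by simp
  next
    case False
    have "0 \<le> a - 2 * (1 / b) * k + (1 / b)\<^sup>2 * k * b" by (rule q)
    with \<open>b \<ge> 0\<close> False have "0 \<le> a - k / b" by (simp add: power2_eq_square field_simps)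
    with \<open>b \<ge> 0\<close> False show ?thesis by (simp add: field_simps)
  qed
qed

lemma psd_Cauchy_Schwarz:
  assumes "psd X"
  shows "(cmod (sesq_form X x y))\<^sup>2 \<le> Re (sesq_form X x x) * Re (sesq_form X y y)"
proof (rule nonneg_quadratic_imp_le)
  let ?g = "sesq_form X x y"
  fix s :: real
  define t where "t = complex_of_real (- s) * cnj ?g"
  have "0 \<le> Re (sesq_form X (\<lambda>i. x i + t * y i) (\<lambda>i. x i + t * y i))"
    using psd_sesq_form_real(2)[OF assms] .
  also have "sesq_form X (\<lambda>i. x i + t * y i) (\<lambda>i. x i + t * y i) =
      sesq_form X x x + t * ?g + cnj (t * ?g) + t * cnj t * sesq_form X y y"
    using sesq_form_add_scaled[of X x t y] psd_sesq_form_swap[OF assms, of y x] by simp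
  also have "t * ?g = complex_of_real (- s * (cmod ?g)\<^sup>2)"
    unfolding t_def by (simp add: cnj_mult_self mult.assoc)
  also have "t * cnj t = complex_of_real (s\<^sup>2) * (cnj ?g * ?g)"
    unfolding t_def by (simp add: power2_eq_square mult_ac)
  also have "\<dots> = complex_of_real (s\<^sup>2 * (cmod ?g)\<^sup>2)"
    by (simp only: cnj_mult_self of_real_mult)
  finally show "0 \<le> Re (sesq_form X x x) - 2 * s * (cmod ?g)\<^sup>2 + s\<^sup>2 * (cmod ?g)\<^sup>2 * Re (sesq_form X y y)"
    using psd_sesq_form_real(1)[OF assms, of y] by (simp add: algebra_simps)
qed (use psd_sesq_form_real(2)[OF assms] in simp_all)

lemma psd_sum: "(\<And>k. k \<in> K \<Longrightarrow> psd (X k)) \<Longrightarrow> psd (\<lambda>i j. \<Sum>k\<in>K. X k i j)"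
  unfolding psd_iff_sesq_form_nonneg sesq_form_sum by (simp add: sum_nonneg)

lemma psd_scale: "0 \<le> r \<Longrightarrow> psd X \<Longrightarrow> psd (\<lambda>i j. complex_of_real r * X i j)"
  unfolding psd_iff_sesq_form_nonneg sesq_form_scale
  by (simp add: less_eq_complex_def mult_nonneg_nonneg)

lemma sesq_form_rank_one:
  "sesq_form (\<lambda>i j. v i * cnj (v j)) w w =
     complex_of_real ((cmod (\<Sum>j\<in>UNIV. cnj (v j) * w j))\<^sup>2)"
  unfolding sesq_form_def cnj_mult_self[symmetric] cnj_sum sum_product
  by (simp add: ac_simps)

lemma psd_rank_one: "psd (\<lambda>i j. v i * cnj (v j))"
  unfolding psd_iff_sesq_form_nonneg sesq_form_rank_one by (simp add: less_eq_complex_def)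

lemma psd_id_op: "psd id_op"
  unfolding psd_iff_sesq_form_nonneg sesq_form_id_op_self
  by (simp add: less_eq_complex_def vec_norm2_def sum_nonneg)

lemma sum_swap_pairs:
  "(\<Sum>a\<in>A. \<Sum>b\<in>B. \<Sum>c\<in>C. \<Sum>d\<in>D. f a b c d) =
   (\<Sum>c\<in>C. \<Sum>d\<in>D. \<Sum>a\<in>A. \<Sum>b\<in>B. f a b c d)"
proof -
  have "(\<Sum>a\<in>A. \<Sum>b\<in>B. \<Sum>c\<in>C. \<Sum>d\<in>D. f a b c d) =
        (\<Sum>a\<in>A. \<Sum>c\<in>C. \<Sum>b\<in>B. \<Sum>d\<in>D. f a b c d)"
    by (rule sum.cong[OF refl]) (rule sum.swap)
  also have "\<dots> = (\<Sum>c\<in>C. \<Sum>a\<in>A. \<Sum>b\<in>B. \<Sum>d\<in>D. f a b c d)"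
    by (rule sum.swap)
  also have "\<dots> = (\<Sum>c\<in>C. \<Sum>a\<in>A. \<Sum>d\<in>D. \<Sum>b\<in>B. f a b c d)"
    by (intro sum.cong refl) (rule sum.swap)
  also have "\<dots> = (\<Sum>c\<in>C. \<Sum>d\<in>D. \<Sum>a\<in>A. \<Sum>b\<in>B. f a b c d)"
    by (rule sum.cong[OF refl]) (rule sum.swap)
  finally show ?thesis .
qed

lemma sum_UNIV_prod:
  "(\<Sum>z\<in>(UNIV :: ('a::finite \<times> 'b::finite) set). f z) = (\<Sum>a\<in>UNIV. \<Sum>b\<in>UNIV. f (a, b))"
  by (simp add: sum.cartesian_product)

lemma sesq_form_congruence:
  fixes X :: "('i::finite) op" and T :: "'i \<Rightarrow> ('j::finite) \<Rightarrow> complex"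
  shows "sesq_form (\<lambda>j j'. \<Sum>i\<in>UNIV. \<Sum>i'\<in>UNIV. cnj (T i j) * X i i' * T i' j') w w =
    sesq_form X (\<lambda>i. \<Sum>j\<in>UNIV. T i j * w j) (\<lambda>i. \<Sum>j\<in>UNIV. T i j * w j)"
proof -
  let ?F = "\<lambda>j j' i i'. cnj (w j) * cnj (T i j) * X i i' * T i' j' * w j'"
  have "sesq_form (\<lambda>j j'. \<Sum>i\<in>UNIV. \<Sum>i'\<in>UNIV. cnj (T i j) * X i i' * T i' j') w w =
      (\<Sum>j\<in>UNIV. \<Sum>j'\<in>UNIV. \<Sum>i\<in>UNIV. \<Sum>i'\<in>UNIV. ?F j j' i i')"
    unfolding sesq_form_def sum_distrib_left sum_distrib_right by (simp add: mult_ac)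
  also have "\<dots> = (\<Sum>i\<in>UNIV. \<Sum>i'\<in>UNIV. \<Sum>j\<in>UNIV. \<Sum>j'\<in>UNIV. ?F j j' i i')"
    by (rule sum_swap_pairs)
  also have "\<dots> = (\<Sum>i\<in>UNIV. \<Sum>i'\<in>UNIV. \<Sum>j'\<in>UNIV. \<Sum>j\<in>UNIV. ?F j j' i i')"
    by (simp only: sum.swap[of "\<lambda>j j'. ?F j j' _ _"])
  also have "\<dots> = sesq_form X (\<lambda>i. \<Sum>j\<in>UNIV. T i j * w j) (\<lambda>i. \<Sum>j\<in>UNIV. T i j * w j)"
    unfolding sesq_form_def cnj_sum sum_distrib_left sum_distrib_right by (simp add: mult_ac)
  finally show ?thesis .
qed

lemma psd_congruence:
  fixes X :: "('i::finite) op" and T :: "'i \<Rightarrow> ('j::finite) \<Rightarrow> complex"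
  assumes "psd X"
  shows "psd (\<lambda>j j'. \<Sum>i\<in>UNIV. \<Sum>i'\<in>UNIV. cnj (T i j) * X i i' * T i' j')"
  using psd_sesq_form_nonneg[OF assms]
  unfolding psd_iff_sesq_form_nonneg sesq_form_congruence by blast

lemma psd_reindex:
  fixes X :: "('i::finite) op" and f :: "('j::finite) \<Rightarrow> 'i"
  assumes "psd X"
  shows "psd (\<lambda>j j'. X (f j) (f j'))"
  using psd_congruence[OF assms, of "\<lambda>i j. if i = f j then 1 else 0"] by simp

lemma psd_zero_diag_imp_zero_row:
  assumes "psd C" "C k k = 0"
  shows "C k j = 0"
  using psd_Cauchy_Schwarz[OF assms(1), of "basis_vec k" "basis_vec j"] assms(2) by simp

text \<open>One step of a Cholesky factorisation. If \<open>C k k = 0\<close> then \<open>v = 0\<close> (division by zero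
  is zero) and row \<open>k\<close> of \<open>C\<close> vanishes, so no positivity of \<open>C k k\<close> is needed.\<close>

lemma psd_column_outer_row:
  assumes C: "psd C" and v_def: "v = (\<lambda>j. C j k / complex_of_real (sqrt (Re (C k k))))"
  shows "v k * cnj (v j) = C k j"
proof -
  define c where "c = Re (C k k)"
  have Ckk: "C k k = complex_of_real c"
    using psd_sesq_form_real(1)[OF C, of "basis_vec k"] c_def by (simp add: complex_eq_iff)
  show ?thesis
  proof (cases "c = 0")
    case True
    then have "v = (\<lambda>_. 0)" unfolding v_def c_def[symmetric] by simp
    with True Ckk C show ?thesis by (simp add: psd_zero_diag_imp_zero_row)
  next
    case False
    have C_adj: "cnj (C j k) = C k j"
      using psd_imp_hermitian[OF C] unfolding hermitian_def by metis
    have "complex_of_real (sqrt c) * complex_of_real (sqrt c) = complex_of_real c"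
      using psd_sesq_form_real(2)[OF C, of "basis_vec k"] c_def by (simp flip: of_real_mult)
    moreover have "v k * cnj (v j) =
        C k k * cnj (C j k) / (complex_of_real (sqrt c) * complex_of_real (sqrt c))"
      unfolding v_def c_def[symmetric] by simp
    ultimately show ?thesis
      unfolding Ckk C_adj using False by simp
  qed
qed

lemma psd_subtract_column:
  assumes C: "psd C" and v_def: "v = (\<lambda>j. C j k / complex_of_real (sqrt (Re (C k k))))"
  shows "psd (\<lambda>i j. C i j - v i * cnj (v j))"
  unfolding psd_iff_sesq_form_nonneg
proof
  fix w
  define c where "c = Re (C k k)"
  consider "c = 0" | "c > 0"
    using psd_sesq_form_real(2)[OF C, of "basis_vec k"] c_def by fastforce
  then show "0 \<le> sesq_form (\<lambda>i j. C i j - v i * cnj (v j)) w w"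
  proof cases
    case 1
    then have "v = (\<lambda>_. 0)" unfolding v_def c_def[symmetric] by simp
    then show ?thesis by (simp add: psd_sesq_form_nonneg[OF C])
  next
    case 2
    define b where "b = sesq_form C (basis_vec k) w"
    have "cnj (C j k) = C k j" for j
      using psd_imp_hermitian[OF C] unfolding hermitian_def by metis
    then have "(\<Sum>j\<in>UNIV. cnj (v j) * w j) = b / complex_of_real (sqrt c)"
      unfolding b_def sesq_form_basis_vec_left v_def c_def[symmetric] by (simp add: sum_divide_distrib)
    then have "sesq_form (\<lambda>i j. C i j - v i * cnj (v j)) w w =
        sesq_form C w w - complex_of_real ((cmod b)\<^sup>2 / c)"
      unfolding sesq_form_diff sesq_form_rank_one using 2 by (simp add: norm_divide power_divide)
    moreover have "(cmod b)\<^sup>2 \<le> c * Re (sesq_form C w w)"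
      using psd_Cauchy_Schwarz[OF C, of "basis_vec k" w] by (simp add: b_def c_def)
    then have "(cmod b)\<^sup>2 / c \<le> Re (sesq_form C w w)"
      using 2 by (simp add: pos_divide_le_eq mult.commute)
    ultimately show ?thesis
      using psd_sesq_form_real[OF C, of w] by (simp add: less_eq_complex_def)
  qed
qed

lemma psd_gram_decomposition_on:
  assumes "finite S" "psd C" "\<And>i j. i \<notin> S \<Longrightarrow> C i j = 0"
  shows "\<exists>V. \<forall>i j. C i j = (\<Sum>k\<in>S. V k i * cnj (V k j))"
  using assms
proof (induction S arbitrary: C rule: finite_induct)
  case empty
  then show ?case by simp
next
  case (insert k S)
  define v where "v = (\<lambda>j. C j k / complex_of_real (sqrt (Re (C k k))))"
  define C' where "C' = (\<lambda>i j. C i j - v i * cnj (v j))"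
  have "psd C'"
    unfolding C'_def by (rule psd_subtract_column[OF insert.prems(1) v_def])
  moreover have "C' i j = 0" if "i \<notin> S" for i j
  proof (cases "i = k")
    case True
    then show ?thesis unfolding C'_def using psd_column_outer_row[OF insert.prems(1) v_def] by simp
  next
    case False
    with that show ?thesis unfolding C'_def v_def by (simp add: insert.prems(2))
  qed
  ultimately obtain V where V: "\<forall>i j. C' i j = (\<Sum>k\<in>S. V k i * cnj (V k j))"
    using insert.IH by blast
  have "(\<Sum>k'\<in>S. (V(k := v)) k' i * cnj ((V(k := v)) k' j)) = (\<Sum>k'\<in>S. V k' i * cnj (V k' j))" for i j
    using insert.hyps(2) by (intro sum.cong) auto
  then show ?case
    using V insert.hyps unfolding C'_def
    by (intro exI[of _ "V(k := v)"]) (simp add: fun_upd_same algebra_simps del: fun_upd_apply)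
qed

lemma psd_gram_decomposition:
  fixes C :: "('i::finite) op"
  assumes "psd C"
  obtains V :: "'i \<Rightarrow> 'i \<Rightarrow> complex" where "\<And>i j. C i j = (\<Sum>k\<in>UNIV. V k i * cnj (V k j))"
  using psd_gram_decomposition_on[OF finite_UNIV assms] by blast

section \<open>Linear maps and complete positivity\<close>

definition matrix_unit :: "'i \<Rightarrow> 'i \<Rightarrow> 'i op" where
  "matrix_unit i i' = (\<lambda>x x'. if x = i \<and> x' = i' then 1 else 0)"

definition kernel_map :: "('i::finite \<Rightarrow> 'i \<Rightarrow> 'o op) \<Rightarrow> 'i op \<Rightarrow> 'o op" where
  "kernel_map K X = (\<lambda>p q. \<Sum>i\<in>UNIV. \<Sum>i'\<in>UNIV. X i i' * K i i' p q)"

lemma sum_matrix_unit: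
  "(\<Sum>i\<in>UNIV. \<Sum>i'\<in>UNIV. X i i' * matrix_unit i i' x x') = (X::('i::finite) op) x x'"
proof -
  have "(\<Sum>i\<in>UNIV. \<Sum>i'\<in>UNIV. X i i' * matrix_unit i i' x x') =
      (\<Sum>i\<in>UNIV. if x = i then \<Sum>i'\<in>UNIV. if x' = i' then X i i' else 0 else 0)"
    unfolding matrix_unit_def by (intro sum.cong) auto
  then show ?thesis by simp
qed

lemma lin_map_add: "lin_map N \<Longrightarrow> N (\<lambda>i j. X i j + Y i j) = (\<lambda>p q. N X p q + N Y p q)"
  unfolding lin_map_def by blast

lemma lin_map_scale: "lin_map N \<Longrightarrow> N (\<lambda>i j. c * X i j) = (\<lambda>p q. c * N X p q)"
  unfolding lin_map_def by blast

lemma lin_map_diff: "lin_map N \<Longrightarrow> N (\<lambda>i j. X i j - Y i j) = (\<lambda>p q. N X p q - N Y p q)"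
  using lin_map_add[of N X "\<lambda>i j. (- 1) * Y i j"] lin_map_scale[of N "- 1" Y] by simp

lemma lin_map_sum:
  assumes "lin_map N" "finite F"
  shows "N (\<lambda>i j. \<Sum>k\<in>F. f k i j) = (\<lambda>p q. \<Sum>k\<in>F. N (f k) p q)"
  using assms(2)
proof (induction F rule: finite_induct)
  case empty
  then show ?case using lin_map_scale[OF assms(1), of 0 "\<lambda>_ _. 0"] by simp
next
  case (insert x F)
  then show ?case using lin_map_add[OF assms(1), of "f x" "\<lambda>i j. \<Sum>k\<in>F. f k i j"] by simp
qed

lemma lin_map_eq_kernel_map:
  fixes N :: "('i::finite) op \<Rightarrow> 'o op"
  assumes "lin_map N"
  shows "N = kernel_map (\<lambda>i i'. N (matrix_unit i i'))"
proof
  fix X :: "'i op"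
  have "N X = N (\<lambda>x x'. \<Sum>i\<in>UNIV. \<Sum>i'\<in>UNIV. X i i' * matrix_unit i i' x x')"
    by (simp only: sum_matrix_unit)
  also have "\<dots> = (\<lambda>p q. \<Sum>i\<in>UNIV. N (\<lambda>x x'. \<Sum>i'\<in>UNIV. X i i' * matrix_unit i i' x x') p q)"
    by (rule lin_map_sum[OF assms finite_UNIV])
  also have "\<dots> = kernel_map (\<lambda>i i'. N (matrix_unit i i')) X"
    unfolding kernel_map_def by (simp add: lin_map_sum[OF assms] lin_map_scale[OF assms])
  finally show "N X = kernel_map (\<lambda>i i'. N (matrix_unit i i')) X" .
qed

lemma lin_map_kernel_map: "lin_map (kernel_map K)"
  unfolding lin_map_def kernel_map_def
  by (simp add: algebra_simps sum.distrib sum_distrib_left)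

lemma kernel_map_matrix_unit: "kernel_map K (matrix_unit i i') = K i i'"
proof -
  have "(\<Sum>j\<in>UNIV. \<Sum>j'\<in>UNIV. matrix_unit i i' j j' * K j j' p q) =
      (\<Sum>j\<in>UNIV. \<Sum>j'\<in>UNIV. K j j' p q * matrix_unit j j' i i')" for p q
    by (intro sum.cong refl) (auto simp: matrix_unit_def)
  then show ?thesis unfolding kernel_map_def by (simp add: fun_eq_iff sum_matrix_unit)
qed

lemma ext_id_kernel_map:
  "ext_id (kernel_map K) Y = (\<lambda>(p, r) (q, r'). \<Sum>i\<in>UNIV. \<Sum>i'\<in>UNIV. Y (i, r) (i', r') * K i i' p q)"
  unfolding ext_id_def kernel_map_def by simp

lemma psd_ext_id_kernel_map:
  fixes K :: "('i::finite) \<Rightarrow> 'i \<Rightarrow> ('o::finite) op" and Y :: "('i \<times> ('r::finite)) op"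
  assumes K: "psd (\<lambda>(p, i) (q, i'). K i i' p q)" and Y: "psd Y"
  shows "psd (ext_id (kernel_map K) Y)"
proof -
  obtain V :: "'i \<times> 'r \<Rightarrow> 'i \<times> 'r \<Rightarrow> complex"
    where V: "\<And>a b. Y a b = (\<Sum>k\<in>UNIV. V k a * cnj (V k b))"
    using psd_gram_decomposition[OF Y] by blast
  \<comment> \<open>With \<open>Y = \<Sum>\<^sub>k v\<^sub>k v\<^sub>k\<^sup>*\<close> the output is the sum of the congruences \<open>T\<^sub>k\<^sup>* K T\<^sub>k\<close>.\<close>
  define T where "T k = (\<lambda>(q::'o, i'::'i) (q0::'o, r'::'r). if q = q0 then cnj (V k (i', r')) else 0)"
    for k
  have "ext_id (kernel_map K) Y (p, r) (q, r') = (\<Sum>k\<in>UNIV. \<Sum>x\<in>UNIV. \<Sum>x'\<in>UNIV.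
      cnj (T k x (p, r)) * (\<lambda>(p, i) (q, i'). K i i' p q) x x' * T k x' (q, r'))" for p r q r'
  proof -
    have "(\<Sum>k\<in>UNIV. \<Sum>x\<in>UNIV. \<Sum>x'\<in>UNIV.
        cnj (T k x (p, r)) * (\<lambda>(p, i) (q, i'). K i i' p q) x x' * T k x' (q, r')) =
      (\<Sum>k\<in>UNIV. \<Sum>i\<in>UNIV. \<Sum>i'\<in>UNIV. V k (i, r) * K i i' p q * cnj (V k (i', r')))"
      unfolding T_def sum_UNIV_prod by simp
    also have "\<dots> = (\<Sum>i\<in>UNIV. \<Sum>k\<in>UNIV. \<Sum>i'\<in>UNIV. V k (i, r) * K i i' p q * cnj (V k (i', r')))"
      by (rule sum.swap)
    also have "\<dots> = (\<Sum>i\<in>UNIV. \<Sum>i'\<in>UNIV. \<Sum>k\<in>UNIV. V k (i, r) * K i i' p q * cnj (V k (i', r')))"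
      by (rule sum.cong[OF refl]) (rule sum.swap)
    also have "\<dots> = (\<Sum>i\<in>UNIV. \<Sum>i'\<in>UNIV. Y (i, r) (i', r') * K i i' p q)"
      unfolding V sum_distrib_right by (simp add: ac_simps)
    finally show ?thesis by (simp add: ext_id_kernel_map)
  qed
  then have "ext_id (kernel_map K) Y = (\<lambda>z z'. \<Sum>k\<in>UNIV. \<Sum>x\<in>UNIV. \<Sum>x'\<in>UNIV.
      cnj (T k x z) * (\<lambda>(p, i) (q, i'). K i i' p q) x x' * T k x' z')"
    by (auto simp: fun_eq_iff)
  then show ?thesis
    by (simp add: psd_sum psd_congruence[OF K])
qed

definition upsilon_op :: "('i \<times> 'i) op" where
  "upsilon_op = (\<lambda>(i, r) (i', r'). if i = r \<and> i' = r' then 1 else 0)"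

lemma psd_upsilon_op: "psd (upsilon_op :: (('i::finite) \<times> 'i) op)"
proof -
  let ?u = "\<lambda>(i::'i, r). if i = r then 1 else 0 :: complex"
  have "upsilon_op = (\<lambda>z z'. ?u z * cnj (?u z'))"
    unfolding upsilon_op_def by (auto simp: fun_eq_iff)
  then show ?thesis using psd_rank_one by metis
qed

lemma ext_id_upsilon_op: "ext_id N upsilon_op = (\<lambda>(p, r) (q, r'). N (matrix_unit r r') p q)"
  unfolding ext_id_def upsilon_op_def matrix_unit_def by (simp add: fun_eq_iff)

lemma compl_pos_ext_id:
  fixes N :: "('i::finite) op \<Rightarrow> ('o::finite) op" and Y :: "('i \<times> ('r::finite)) op"
  assumes "lin_map N" "compl_pos N" "psd Y"
  shows "psd (ext_id N Y)"
proof -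
  have "psd (ext_id N upsilon_op)"
    using assms(2) psd_upsilon_op unfolding compl_pos_def by blast
  then have "psd (\<lambda>(p, i) (q, i'). N (matrix_unit i i') p q)"
    unfolding ext_id_upsilon_op .
  from psd_ext_id_kernel_map[OF this assms(3)] show ?thesis
    by (simp flip: lin_map_eq_kernel_map[OF assms(1)])
qed

lemma compl_pos_imp_psd:
  fixes N :: "('i::finite) op \<Rightarrow> ('o::finite) op"
  assumes "lin_map N" "compl_pos N" "psd X"
  shows "psd (N X)"
proof -
  have "psd (\<lambda>(i, _::unit) (i', _::unit). X i i')"
    using psd_reindex[OF assms(3), of "fst :: 'i \<times> unit \<Rightarrow> 'i"] by (simp add: case_prod_beta')
  from psd_reindex[OF compl_pos_ext_id[OF assms(1,2) this], of "\<lambda>p. (p, ())"]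
  show ?thesis unfolding ext_id_def by simp
qed

lemma ext_id_comp: "ext_id (\<lambda>X. F (G X)) Y = ext_id F (ext_id G Y)"
  unfolding ext_id_def by (simp add: fun_eq_iff split_paired_All)

section \<open>Choi operators of bipartite maps and superchannels\<close>

definition choi_map ::
  "((('ai::finite) \<times> 'ao) \<times> ('bo \<times> ('bi::finite))) op \<Rightarrow> ('ai \<times> 'bi) op \<Rightarrow> ('ao \<times> 'bo) op" where
  "choi_map R = kernel_map (\<lambda>(l, m) (l', m') (a, b) (a', b'). R ((l, a), (b, m)) ((l', a'), (b', m')))"

lemma matrix_unit_pair:
  "matrix_unit (l, m) (l', m') =
     (\<lambda>(x, y) (x', y'). if x = l \<and> x' = l' \<and> y = m \<and> y' = m' then 1 else 0)"
  by (auto simp: matrix_unit_def fun_eq_iff)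

lemma choi_bip_as_kernel:
  "(\<lambda>(l, m) (l', m') (a, b) (a', b'). choi_bip N ((l, a), (b, m)) ((l', a'), (b', m'))) =
     (\<lambda>i i'. N (matrix_unit i i'))"
  by (simp add: fun_eq_iff choi_bip_def matrix_unit_pair split_paired_All)

lemma lin_map_eq_choi_map: "lin_map N \<Longrightarrow> N = choi_map (choi_bip N)"
  unfolding choi_map_def choi_bip_as_kernel by (rule lin_map_eq_kernel_map)

lemma lin_map_choi_map: "lin_map (choi_map R)"
  unfolding choi_map_def by (rule lin_map_kernel_map)

lemma choi_bip_choi_map: "choi_bip (choi_map R) = R"
  unfolding choi_bip_def choi_map_def matrix_unit_pair[symmetric] kernel_map_matrix_unit
  by (simp add: fun_eq_iff split_paired_all)

lemma psd_choi_bip: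
  fixes N :: "(('ai::finite) \<times> ('bi::finite)) op \<Rightarrow> (('ao::finite) \<times> ('bo::finite)) op"
  assumes "psd (ext_id N upsilon_op)"
  shows "psd (choi_bip N)"
proof -
  have "choi_bip N = (\<lambda>z z'. ext_id N upsilon_op
      ((\<lambda>((l, a), (b, m)). ((a, b), (l, m))) z) ((\<lambda>((l, a), (b, m)). ((a, b), (l, m))) z'))"
    unfolding ext_id_upsilon_op choi_bip_def by (simp add: fun_eq_iff matrix_unit_pair)
  with psd_reindex[OF assms] show ?thesis by metis
qed

definition block ::
  "(('ahi \<times> 'am) \<times> ('bhi \<times> 'bm)) op \<Rightarrow>
   'am \<Rightarrow> 'bm \<Rightarrow> 'am \<Rightarrow> 'bm \<Rightarrow> ('ahi \<times> 'bhi) op" where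
  "block Z m n m' n' = (\<lambda>(x, y) (x', y'). Z ((x, m), (y, n)) ((x', m'), (y', n')))"

abbreviation diag_block :: "(('ahi \<times> 'am) \<times> ('bhi \<times> 'bm)) op \<Rightarrow> 'am \<Rightarrow> 'bm \<Rightarrow> ('ahi \<times> 'bhi) op" where "diag_block Z m n \<equiv> block Z m n m n"

lemma psd_diag_block: "psd Z \<Longrightarrow> psd (diag_block Z m n)"
  using psd_reindex[of Z "\<lambda>(x, y). ((x, m), (y, n))"]
  unfolding block_def by (simp add: case_prod_beta')

lemma mid_ext_eq_block:
  "mid_ext G Z = (\<lambda>((m, h), (g, n)) ((m', h'), (g', n')). G (block Z m n m' n') (h, g) (h', g'))"
  unfolding mid_ext_def block_def ..

lemma block_add: "block (\<lambda>i j. X i j + Y i j) m n m' n' = (\<lambda>i j. block X m n m' n' i j + block Y m n m' n' i j)"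
  unfolding block_def by (simp add: fun_eq_iff split_paired_All)

lemma block_scale: "block (\<lambda>i j. c * X i j) m n m' n' = (\<lambda>i j. c * block X m n m' n' i j)"
  unfolding block_def by (simp add: fun_eq_iff split_paired_All)

lemma lin_map_mid_ext: "lin_map G \<Longrightarrow> lin_map (mid_ext G)"
  unfolding lin_map_def[of "mid_ext G"] mid_ext_eq_block
  by (simp add: block_add block_scale lin_map_add lin_map_scale fun_eq_iff split_paired_All)

lemma lin_map_superch:
  assumes A: "lin_map A" and C: "lin_map C" and G: "lin_map G"
  shows "lin_map (superch A C G)"
proof -
  have M: "lin_map (mid_ext G)" by (rule lin_map_mid_ext[OF G])
  show ?thesis
    unfolding lin_map_def superch_def
    by (simp add: lin_map_add[OF A] lin_map_scale[OF A] lin_map_add[OF M] lin_map_scale[OF M]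
        lin_map_add[OF C] lin_map_scale[OF C])
qed

lemma psd_ext_id_mid_ext:
  fixes R :: "((('ahi::finite) \<times> ('aho::finite)) \<times> (('bho::finite) \<times> ('bhi::finite))) op"
    and Y :: "((('ahi \<times> ('am::finite)) \<times> ('bhi \<times> ('bm::finite))) \<times> ('r::finite)) op"
  assumes R: "psd R" and Y: "psd Y"
  shows "psd (ext_id (mid_ext (choi_map R)) Y)"
proof -
  define f where "f = (\<lambda>((x::'ahi, y::'bhi), ((m::'am, n::'bm), r::'r)). (((x, m), (y, n)), r))"
  define g where "g = (\<lambda>(((m::'am, h::'aho), (k::'bho, n::'bm)), r::'r). ((h, k), ((m, n), r)))"
  have "psd (\<lambda>(p, i) (q, i').
      (\<lambda>(l, m) (l', m') (a, b) (a', b'). R ((l, a), (b, m)) ((l', a'), (b', m'))) i i' p q)"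
    using psd_reindex[OF R, of "\<lambda>((a, b), (l, m)). ((l, a), (b, m))"] by (simp add: case_prod_beta')
  from psd_ext_id_kernel_map[OF this psd_reindex[OF Y, of f]]
  have "psd (ext_id (choi_map R) (\<lambda>z z'. Y (f z) (f z')))"
    unfolding choi_map_def .
  moreover have "ext_id (mid_ext (choi_map R)) Y =
      (\<lambda>z z'. ext_id (choi_map R) (\<lambda>z z'. Y (f z) (f z')) (g z) (g z'))"
    unfolding ext_id_def mid_ext_def f_def g_def by (simp add: fun_eq_iff case_prod_beta')
  ultimately show ?thesis using psd_reindex by metis
qed

lemma psd_ext_id_superch:
  fixes A :: "(('ai::finite) \<times> ('bi::finite)) op \<Rightarrow> ((('ahi::finite) \<times> ('am::finite)) \<times> (('bhi::finite) \<times> ('bm::finite))) op"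
    and C :: "(('am \<times> ('aho::finite)) \<times> (('bho::finite) \<times> 'bm)) op \<Rightarrow> (('ao::finite) \<times> ('bo::finite)) op"
    and R :: "(('ahi \<times> 'aho) \<times> ('bho \<times> 'bhi)) op" and Y :: "(('ai \<times> 'bi) \<times> ('r::finite)) op"
  assumes "lin_map A" "compl_pos A" "lin_map C" "compl_pos C" "psd R" "psd Y"
  shows "psd (ext_id (superch A C (choi_map R)) Y)"
proof -
  have "ext_id (superch A C (choi_map R)) Y = ext_id C (ext_id (mid_ext (choi_map R)) (ext_id A Y))"
    unfolding superch_def
    by (simp only: ext_id_comp[of C "\<lambda>X. mid_ext (choi_map R) (A X)"]
        ext_id_comp[of "mid_ext (choi_map R)" A])
  then show ?thesis
    using assms by (simp add: compl_pos_ext_id psd_ext_id_mid_ext)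
qed

section \<open>Partial transposition\<close>

definition ptrans_conj :: "(('a \<times> 'b) op \<Rightarrow> ('c \<times> 'd) op) \<Rightarrow> ('a \<times> 'b) op \<Rightarrow> ('c \<times> 'd) op" where
  "ptrans_conj N = (\<lambda>X. ptrans2 (N (ptrans2 X)))"

lemma ptrans2_ptrans2 [simp]: "ptrans2 (ptrans2 X) = X"
  by (simp add: ptrans2_def fun_eq_iff split_paired_All)

lemma ptrans2_add: "ptrans2 (\<lambda>z z'. X z z' + Y z z') = (\<lambda>z z'. ptrans2 X z z' + ptrans2 Y z z')"
  by (auto simp: ptrans2_def fun_eq_iff)

lemma ptrans2_diff: "ptrans2 (\<lambda>z z'. X z z' - Y z z') = (\<lambda>z z'. ptrans2 X z z' - ptrans2 Y z z')"
  by (auto simp: ptrans2_def fun_eq_iff)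

lemma ptrans2_scale: "ptrans2 (\<lambda>z z'. c * X z z') = (\<lambda>z z'. c * ptrans2 X z z')"
  by (auto simp: ptrans2_def fun_eq_iff)

lemma ptrans2_diag: "ptrans2 X z z = X z z"
  by (cases z) (simp add: ptrans2_def)

lemma hermitian_ptrans2: "hermitian X \<Longrightarrow> hermitian (ptrans2 X)"
  unfolding hermitian_def ptrans2_def by (simp (no_asm) add: split_paired_all) blast

lemma lin_map_ptrans_conj: "lin_map N \<Longrightarrow> lin_map (ptrans_conj N)"
  unfolding lin_map_def ptrans_conj_def by (simp add: ptrans2_add ptrans2_scale)

lemma ptrans2_choi_bip: "ptrans2 (choi_bip N) = choi_bip (ptrans_conj N)"
  by (simp add: choi_bip_def ptrans_conj_def ptrans2_def fun_eq_iff split_paired_All conj_ac)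

lemma ptrans_conj_choi_map: "ptrans_conj (choi_map R) = choi_map (ptrans2 R)"
proof -
  have "ptrans_conj (choi_map R) = choi_map (choi_bip (ptrans_conj (choi_map R)))"
    by (rule lin_map_eq_choi_map[OF lin_map_ptrans_conj[OF lin_map_choi_map]])
  then show ?thesis
    by (simp flip: ptrans2_choi_bip add: choi_bip_choi_map)
qed

lemma ptrans_conj_superch: "ptrans_conj (superch A C G) = superch (ptrans_conj A) (ptrans_conj C) (ptrans_conj G)"
proof -
  have mid: "mid_ext (\<lambda>X. ptrans2 (G (ptrans2 X))) Z = ptrans2 (mid_ext G (ptrans2 Z))" for Z
    by (simp add: mid_ext_def ptrans2_def fun_eq_iff split_paired_All case_prod_beta')
  show ?thesis
    by (rule ext) (simp add: superch_def ptrans_conj_def mid)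
qed

section \<open>The superchannel acting on Choi operators\<close>

definition choi_transform ::
  "(('ai \<times> 'bi) op \<Rightarrow> ((('ahi::finite) \<times> 'am) \<times> (('bhi::finite) \<times> 'bm)) op) \<Rightarrow>
   ((('am \<times> 'aho) \<times> ('bho \<times> 'bm)) op \<Rightarrow> ('ao \<times> 'bo) op) \<Rightarrow>
   (('ahi \<times> 'aho) \<times> ('bho \<times> 'bhi)) op \<Rightarrow> (('ai \<times> 'ao) \<times> ('bo \<times> 'bi)) op" where
  "choi_transform A C R = choi_bip (superch A C (choi_map R))"

lemma choi_transform_choi_bip: "lin_map M \<Longrightarrow> choi_transform A C (choi_bip M) = choi_bip (superch A C M)"
  unfolding choi_transform_def by (simp flip: lin_map_eq_choi_map)

lemma choi_map_add: "choi_map (\<lambda>z z'. R z z' + S z z') = (\<lambda>X p q. choi_map R X p q + choi_map S X p q)"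
  unfolding choi_map_def kernel_map_def
  by (simp add: case_prod_beta' distrib_left sum.distrib fun_eq_iff)

lemma choi_map_scale: "choi_map (\<lambda>z z'. c * R z z') = (\<lambda>X p q. c * choi_map R X p q)"
  unfolding choi_map_def kernel_map_def
  by (simp add: case_prod_beta' sum_distrib_left fun_eq_iff ac_simps)

lemma mid_ext_add: "mid_ext (\<lambda>X p q. F X p q + G X p q) Z = (\<lambda>p q. mid_ext F Z p q + mid_ext G Z p q)"
  unfolding mid_ext_def by (simp add: fun_eq_iff split_paired_All)

lemma mid_ext_scale: "mid_ext (\<lambda>X p q. c * F X p q) Z = (\<lambda>p q. c * mid_ext F Z p q)"
  unfolding mid_ext_def by (simp add: fun_eq_iff split_paired_All)

lemma choi_bip_add: "choi_bip (\<lambda>X p q. F X p q + G X p q) = (\<lambda>z z'. choi_bip F z z' + choi_bip G z z')"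
  unfolding choi_bip_def by (simp add: fun_eq_iff split_paired_All)

lemma choi_bip_scale: "choi_bip (\<lambda>X p q. c * F X p q) = (\<lambda>z z'. c * choi_bip F z z')"
  unfolding choi_bip_def by (simp add: fun_eq_iff split_paired_All)

lemma lin_map_choi_transform: "lin_map C \<Longrightarrow> lin_map (choi_transform A C)"
  unfolding lin_map_def[of "choi_transform A C"] choi_transform_def superch_def
  by (simp add: choi_map_add choi_map_scale mid_ext_add mid_ext_scale lin_map_add lin_map_scale
      choi_bip_add choi_bip_scale)

lemma psd_choi_transform:
  assumes "lin_map A" "compl_pos A" "lin_map C" "compl_pos C" "psd R"
  shows "psd (choi_transform A C R)"
  unfolding choi_transform_def
  by (rule psd_choi_bip psd_ext_id_superch assms psd_upsilon_op)+

lemma ptrans2_choi_transform: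
  "ptrans2 (choi_transform A C R) = choi_transform (ptrans_conj A) (ptrans_conj C) (ptrans2 R)"
  unfolding choi_transform_def ptrans2_choi_bip ptrans_conj_superch ptrans_conj_choi_map ..

lemma psd_ptrans2_choi_transform:
  assumes "cppt_pres A" "cppt_pres C" "psd (ptrans2 R)"
  shows "psd (ptrans2 (choi_transform A C R))"
  unfolding ptrans2_choi_transform
  using assms unfolding cppt_pres_def qchannel_def ptrans_conj_def[symmetric]
  by (intro psd_choi_transform lin_map_ptrans_conj) auto

section \<open>The operator norm\<close>

lemma vec_norm_eq_sqrt: "vec_norm v = sqrt (vec_norm2 v)"
  unfolding vec_norm_def vec_norm2_def ..

lemma vec_norm2_nonneg: "vec_norm2 v \<ge> 0"
  unfolding vec_norm2_def by (simp add: sum_nonneg)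

lemma vec_norm2_component: "(cmod (v i))\<^sup>2 \<le> vec_norm2 v"
  unfolding vec_norm2_def by (rule member_le_sum) auto

lemma vec_norm2_scale: "vec_norm2 (\<lambda>i. complex_of_real r * v i) = r\<^sup>2 * vec_norm2 v"
  unfolding vec_norm2_def by (simp add: norm_mult power_mult_distrib sum_distrib_left)

lemma vec_norm2_eq_0: "vec_norm2 v = 0 \<Longrightarrow> v = (\<lambda>_. 0)"
  unfolding vec_norm2_def by (simp add: sum_nonneg_eq_0_iff fun_eq_iff)

lemma op_apply_scale: "op_apply X (\<lambda>i. c * v i) = (\<lambda>i. c * op_apply X v i)"
  unfolding op_apply_def by (simp add: sum_distrib_left mult.left_commute)

lemma bdd_above_op_norm: "bdd_above {vec_norm (op_apply X v) | v. vec_norm v \<le> 1}"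
proof -
  define K where "K = (\<Sum>i\<in>UNIV. (\<Sum>j\<in>UNIV. cmod (X i j))\<^sup>2)"
  have "vec_norm (op_apply X v) \<le> sqrt K" if "vec_norm v \<le> 1" for v
  proof -
    have "(cmod (v j))\<^sup>2 \<le> 1\<^sup>2" for j
      using vec_norm2_component[of v j] that unfolding vec_norm_eq_sqrt by simp
    then have v_le: "cmod (v j) \<le> 1" for j
      by (rule power2_le_imp_le) simp
    have "cmod (op_apply X v i) \<le> (\<Sum>j\<in>UNIV. cmod (X i j))" for i
      unfolding op_apply_def
      by (rule order_trans[OF norm_sum sum_mono]) (simp add: norm_mult mult_left_le v_le)
    then have "vec_norm2 (op_apply X v) \<le> K"
      unfolding vec_norm2_def K_def by (intro sum_mono power_mono) simp_all
    then show ?thesis unfolding vec_norm_eq_sqrt by simp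
  qed
  then show ?thesis unfolding bdd_above_def by blast
qed

lemma op_norm_inf_upper: "vec_norm v \<le> 1 \<Longrightarrow> vec_norm (op_apply X v) \<le> op_norm_inf X"
  unfolding op_norm_inf_def by (rule cSup_upper[OF _ bdd_above_op_norm]) blast

lemma op_norm_inf_least:
  assumes "\<And>v. vec_norm v \<le> 1 \<Longrightarrow> vec_norm (op_apply X v) \<le> c"
  shows "op_norm_inf X \<le> c"
  unfolding op_norm_inf_def
proof (rule cSup_least)
  have "vec_norm (\<lambda>_::'a. 0::complex) \<le> 1" by (simp add: vec_norm_def)
  then show "{vec_norm (op_apply X v) |v. vec_norm v \<le> 1} \<noteq> {}" by blast
qed (use assms in blast)

lemma op_norm_inf_nonneg: "0 \<le> op_norm_inf X"
  using op_norm_inf_upper[of "\<lambda>_. 0" X] by (simp add: vec_norm_def op_apply_def)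

lemma op_norm_inf_bound: "vec_norm (op_apply X v) \<le> op_norm_inf X * vec_norm v"
proof (cases "vec_norm2 v = 0")
  case True
  then have "v = (\<lambda>_. 0)" by (rule vec_norm2_eq_0)
  then show ?thesis by (simp add: vec_norm_def op_apply_def)
next
  case False
  define n where "n = vec_norm v"
  have n: "n > 0" unfolding n_def vec_norm_eq_sqrt using False vec_norm2_nonneg[of v] by simp
  let ?u = "\<lambda>i. complex_of_real (1 / n) * v i"
  have "vec_norm ?u = 1"
    using n unfolding vec_norm_eq_sqrt vec_norm2_scale n_def by (simp add: real_sqrt_mult)
  then have "vec_norm (op_apply X ?u) \<le> op_norm_inf X" by (simp add: op_norm_inf_upper)
  moreover have "vec_norm (op_apply X ?u) = vec_norm (op_apply X v) / n"
    using n unfolding op_apply_scale vec_norm_eq_sqrt vec_norm2_scale by (simp add: real_sqrt_mult)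
  ultimately show ?thesis using n unfolding n_def by (simp add: divide_le_eq)
qed

lemma op_norm_inf_diag: "cmod (X i i) \<le> op_norm_inf X"
proof -
  have "vec_norm (basis_vec i) = 1"
    unfolding vec_norm_def basis_vec_def by (simp add: if_distrib[of "\<lambda>z. (cmod z)\<^sup>2"] cong: if_cong)
  moreover have "op_apply X (basis_vec i) = (\<lambda>j. X j i)"
    unfolding op_apply_def basis_vec_def by simp
  ultimately have "vec_norm (\<lambda>j. X j i) \<le> op_norm_inf X"
    using op_norm_inf_upper[of "basis_vec i" X] by simp
  moreover have "cmod (X i i) \<le> vec_norm (\<lambda>j. X j i)"
    using vec_norm2_component[of "\<lambda>j. X j i" i] unfolding vec_norm_eq_sqrt by (simp add: real_le_rsqrt)
  ultimately show ?thesis by simp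
qed

lemma sesq_form_scaled_id_minus:
  "sesq_form (\<lambda>i j. complex_of_real c * id_op i j - X i j) w w =
     complex_of_real (c * vec_norm2 w) - sesq_form X w w"
  using sesq_form_diff[of "\<lambda>i j. complex_of_real c * id_op i j" X w]
  by (simp add: sesq_form_scale sesq_form_id_op_self)

lemma psd_scaled_id_minus_iff:
  assumes "psd X"
  shows "psd (\<lambda>i j. complex_of_real c * id_op i j - X i j) \<longleftrightarrow>
    (\<forall>w. Re (sesq_form X w w) \<le> c * vec_norm2 w)"
  using psd_sesq_form_real(1)[OF assms]
  unfolding psd_iff_sesq_form_nonneg sesq_form_scaled_id_minus by (simp add: less_eq_complex_def)

lemma Cauchy_Schwarz_vec_norm:
  "cmod (\<Sum>i\<in>UNIV. cnj (x i) * y i) \<le> vec_norm x * vec_norm y"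
proof -
  have "(cmod (\<Sum>i\<in>UNIV. cnj (x i) * y i))\<^sup>2 \<le> vec_norm2 x * vec_norm2 y"
    using psd_Cauchy_Schwarz[OF psd_id_op, of x y] by (simp add: sesq_form_id_op_self flip: sesq_form_id_op)
  then show ?thesis unfolding vec_norm_eq_sqrt real_sqrt_mult[symmetric] by (rule real_le_rsqrt)
qed

lemma sesq_form_le_op_norm_inf: "cmod (sesq_form X w w) \<le> op_norm_inf X * vec_norm2 w"
proof -
  have "cmod (sesq_form X w w) \<le> vec_norm w * vec_norm (op_apply X w)"
    unfolding sesq_form_op_apply by (rule Cauchy_Schwarz_vec_norm)
  also have "\<dots> \<le> vec_norm w * (op_norm_inf X * vec_norm w)"
    by (intro mult_left_mono op_norm_inf_bound) (simp add: vec_norm_eq_sqrt vec_norm2_nonneg)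
  also have "\<dots> = op_norm_inf X * vec_norm2 w"
    unfolding vec_norm_eq_sqrt using vec_norm2_nonneg[of w] by (simp add: ac_simps)
  finally show ?thesis .
qed

lemma psd_op_norm_id_minus:
  assumes "psd P"
  shows "psd (\<lambda>i j. complex_of_real (op_norm_inf P) * id_op i j - P i j)"
  unfolding psd_scaled_id_minus_iff[OF assms]
  using complex_Re_le_cmod order_trans sesq_form_le_op_norm_inf by blast

text \<open>For \<open>0 \<le> G \<le> c\<close> and \<open>u = G v\<close>, Cauchy--Schwarz for the form of \<open>G\<close> gives
  \<open>\<bar>u\<bar>\<^sup>4 = \<langle>u, G v\<rangle>\<^sup>2 \<le> \<langle>u, G u\<rangle> \<langle>v, G v\<rangle> \<le> c\<^sup>2 \<bar>u\<bar>\<^sup>2 \<bar>v\<bar>\<^sup>2\<close>.\<close>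

lemma op_norm_inf_le_if_psd:
  fixes G :: "('i::finite) op"
  assumes G: "psd G" and le: "psd (\<lambda>i j. complex_of_real c * id_op i j - G i j)" and "c \<ge> 0"
  shows "op_norm_inf G \<le> c"
proof (rule op_norm_inf_least)
  fix v :: "'i \<Rightarrow> complex"
  assume v: "vec_norm v \<le> 1"
  have bound: "Re (sesq_form G w w) \<le> c * vec_norm2 w" for w
    using le unfolding psd_scaled_id_minus_iff[OF G] by blast
  define u where "u = op_apply G v"
  have "sesq_form G u v = complex_of_real (vec_norm2 u)"
    unfolding sesq_form_op_apply u_def[symmetric]
    by (simp add: sesq_form_id_op_self flip: sesq_form_id_op)
  then have "(vec_norm2 u)\<^sup>2 \<le> Re (sesq_form G u u) * Re (sesq_form G v v)"
    using psd_Cauchy_Schwarz[OF G, of u v] by simp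
  also have "\<dots> \<le> (c * vec_norm2 u) * (c * vec_norm2 v)"
    by (intro mult_mono bound) (simp_all add: psd_sesq_form_real(2)[OF G] \<open>c \<ge> 0\<close> vec_norm2_nonneg)
  also have "\<dots> \<le> (c * vec_norm2 u) * c"
    using v \<open>c \<ge> 0\<close> vec_norm2_nonneg[of u] unfolding vec_norm_eq_sqrt
    by (intro mult_left_mono) (simp_all add: mult_left_le)
  finally have "vec_norm2 u \<le> c\<^sup>2"
    using vec_norm2_nonneg[of u] by (cases "vec_norm2 u = 0") (simp_all add: power2_eq_square)
  then show "vec_norm (op_apply G v) \<le> c"
    unfolding u_def[symmetric] vec_norm_eq_sqrt using \<open>c \<ge> 0\<close> by (simp add: real_sqrt_le_iff real_le_lsqrt)
qed

section \<open>Traces\<close>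

definition trace_pairing :: "('i::finite) op \<Rightarrow> 'i op \<Rightarrow> complex" where
  "trace_pairing X P = (\<Sum>i\<in>UNIV. \<Sum>i'\<in>UNIV. X i i' * P i i')"

lemma trace_pairing_nonneg:
  fixes X :: "('i::finite) op"
  assumes "psd X" "psd P"
  shows "0 \<le> trace_pairing X P"
proof -
  obtain V :: "'i \<Rightarrow> 'i \<Rightarrow> complex" where V: "\<And>i j. X i j = (\<Sum>k\<in>UNIV. V k i * cnj (V k j))"
    using psd_gram_decomposition[OF assms(1)] by blast
  have "trace_pairing X P = (\<Sum>i\<in>UNIV. \<Sum>i'\<in>UNIV. \<Sum>k\<in>UNIV. V k i * cnj (V k i') * P i i')"
    unfolding trace_pairing_def V by (simp add: sum_distrib_right)
  also have "\<dots> = (\<Sum>i\<in>UNIV. \<Sum>k\<in>UNIV. \<Sum>i'\<in>UNIV. V k i * cnj (V k i') * P i i')"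
    by (rule sum.cong[OF refl]) (rule sum.swap)
  also have "\<dots> = (\<Sum>k\<in>UNIV. \<Sum>i\<in>UNIV. \<Sum>i'\<in>UNIV. V k i * cnj (V k i') * P i i')"
    by (rule sum.swap)
  also have "\<dots> = (\<Sum>k\<in>UNIV. sesq_form P (\<lambda>i. cnj (V k i)) (\<lambda>i. cnj (V k i)))"
    unfolding sesq_form_def by (simp add: mult_ac)
  finally show ?thesis
    using psd_sesq_form_nonneg[OF assms(2)] by (simp add: sum_nonneg)
qed

lemma trace_pairing_le:
  assumes "psd X" "psd (\<lambda>i j. complex_of_real c * id_op i j - P i j)"
  shows "trace_pairing X P \<le> complex_of_real c * trace_op X"
proof -
  have "trace_pairing X (\<lambda>i j. complex_of_real c * id_op i j - P i j) =
      complex_of_real c * trace_op X - trace_pairing X P"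
    unfolding trace_pairing_def trace_op_def id_op_def
    by (simp add: right_diff_distrib sum_subtractf sum_distrib_left mult.commute)
  then show ?thesis using trace_pairing_nonneg[OF assms] by simp
qed

lemma trace_op_prod: "trace_op (X :: (('a::finite) \<times> ('b::finite)) op) = (\<Sum>a\<in>UNIV. \<Sum>b\<in>UNIV. X (a, b) (a, b))"
  unfolding trace_op_def by (simp add: sum_UNIV_prod)

lemma trace_rank_one: "trace_op (\<lambda>L L'. cnj (w L) * w L') = complex_of_real (vec_norm2 w)"
  unfolding trace_op_def vec_norm2_def by (simp add: cnj_mult_self)

lemma trace_kernel_map: "trace_op (kernel_map K W) = (\<Sum>i\<in>UNIV. \<Sum>i'\<in>UNIV. W i i' * trace_op (K i i'))"
proof -
  have "trace_op (kernel_map K W) = (\<Sum>p\<in>UNIV. \<Sum>i\<in>UNIV. \<Sum>i'\<in>UNIV. W i i' * K i i' p p)"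
    unfolding trace_op_def kernel_map_def ..
  also have "\<dots> = (\<Sum>i\<in>UNIV. \<Sum>i'\<in>UNIV. \<Sum>p\<in>UNIV. W i i' * K i i' p p)"
    by (subst sum.swap) (rule sum.cong[OF refl], rule sum.swap)
  finally show ?thesis unfolding trace_op_def by (simp add: sum_distrib_left)
qed

lemma trace_choi_map: "trace_op (choi_map Q X) = trace_pairing X (ptrace_AB Q)"
  unfolding choi_map_def trace_kernel_map trace_pairing_def ptrace_AB_def
  by (simp add: sum_UNIV_prod trace_op_prod case_prod_beta')

lemma ptrace_AB_choi_bip: "ptrace_AB (choi_bip F) = (\<lambda>L L'. trace_op (F (matrix_unit L L')))"
  unfolding ptrace_AB_def choi_bip_def
  by (simp add: fun_eq_iff split_paired_All matrix_unit_pair trace_op_prod)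

lemma sesq_form_ptrace_AB_choi_bip:
  assumes "lin_map F"
  shows "sesq_form (ptrace_AB (choi_bip F)) w w = trace_op (F (\<lambda>L L'. cnj (w L) * w L'))"
  unfolding ptrace_AB_choi_bip sesq_form_def
  by (subst lin_map_eq_kernel_map[OF assms]) (simp add: trace_kernel_map mult_ac)

lemma psd_ptrace_AB:
  assumes "psd Q"
  shows "psd (ptrace_AB Q)"
proof -
  have "ptrace_AB Q = (\<lambda>z z'. \<Sum>a\<in>UNIV. \<Sum>b\<in>UNIV.
      Q ((\<lambda>(l, m). ((l, a), (b, m))) z) ((\<lambda>(l, m). ((l, a), (b, m))) z'))"
    unfolding ptrace_AB_def by (simp add: fun_eq_iff split_paired_All)
  then show ?thesis
    by (simp add: psd_sum psd_reindex[OF assms])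
qed

lemma trace_op_diag_blocks: "trace_op Z = (\<Sum>m\<in>UNIV. \<Sum>n\<in>UNIV. trace_op (diag_block Z m n))"
proof -
  let ?z = "\<lambda>x m y n. Z ((x, m), (y, n)) ((x, m), (y, n))"
  have "trace_op Z = (\<Sum>x\<in>UNIV. \<Sum>m\<in>UNIV. \<Sum>y\<in>UNIV. \<Sum>n\<in>UNIV. ?z x m y n)"
    unfolding trace_op_prod sum_UNIV_prod by simp
  also have "\<dots> = (\<Sum>x\<in>UNIV. \<Sum>y\<in>UNIV. \<Sum>m\<in>UNIV. \<Sum>n\<in>UNIV. ?z x m y n)"
    by (rule sum.cong[OF refl]) (rule sum.swap)
  also have "\<dots> = (\<Sum>m\<in>UNIV. \<Sum>n\<in>UNIV. \<Sum>x\<in>UNIV. \<Sum>y\<in>UNIV. ?z x m y n)"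
    by (rule sum_swap_pairs)
  finally show ?thesis
    unfolding trace_op_prod block_def by simp
qed

lemma trace_mid_ext: "trace_op (mid_ext G Z) = (\<Sum>m\<in>UNIV. \<Sum>n\<in>UNIV. trace_op (G (diag_block Z m n)))"
proof -
  let ?t = "\<lambda>m h g n. G (diag_block Z m n) (h, g) (h, g)"
  have "trace_op (mid_ext G Z) = (\<Sum>m\<in>UNIV. \<Sum>h\<in>UNIV. \<Sum>g\<in>UNIV. \<Sum>n\<in>UNIV. ?t m h g n)"
    unfolding trace_op_prod sum_UNIV_prod mid_ext_def block_def by simp
  also have "\<dots> = (\<Sum>m\<in>UNIV. \<Sum>h\<in>UNIV. \<Sum>n\<in>UNIV. \<Sum>g\<in>UNIV. ?t m h g n)"
    by (intro sum.cong refl) (rule sum.swap)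
  also have "\<dots> = (\<Sum>m\<in>UNIV. \<Sum>n\<in>UNIV. \<Sum>h\<in>UNIV. \<Sum>g\<in>UNIV. ?t m h g n)"
    by (rule sum.cong[OF refl]) (rule sum.swap)
  finally show ?thesis
    unfolding trace_op_prod by simp
qed

lemma trace_pres_mid_ext: "trace_pres G \<Longrightarrow> trace_pres (mid_ext G)"
  unfolding trace_pres_def by (simp add: trace_mid_ext flip: trace_op_diag_blocks)

lemma trace_pres_superch:
  "trace_pres A \<Longrightarrow> trace_pres C \<Longrightarrow> trace_pres G \<Longrightarrow> trace_pres (superch A C G)"
  using trace_pres_mid_ext[of G] unfolding trace_pres_def superch_def by metis

lemma sesq_form_ptrace_AB_choi_transform:
  assumes "lin_map A" "lin_map C" "trace_pres C"
  shows "sesq_form (ptrace_AB (choi_transform A C Q)) w w =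
    (\<Sum>m\<in>UNIV. \<Sum>n\<in>UNIV. trace_pairing (diag_block (A (\<lambda>L L'. cnj (w L) * w L')) m n) (ptrace_AB Q))"
proof -
  let ?W = "\<lambda>L L'. cnj (w L) * w L'"
  have "sesq_form (ptrace_AB (choi_transform A C Q)) w w = trace_op (superch A C (choi_map Q) ?W)"
    unfolding choi_transform_def
    by (rule sesq_form_ptrace_AB_choi_bip[OF lin_map_superch[OF assms(1,2) lin_map_choi_map]])
  also have "\<dots> = trace_op (mid_ext (choi_map Q) (A ?W))"
    using assms(3) by (simp add: superch_def trace_pres_def)
  finally show ?thesis
    by (simp add: trace_mid_ext trace_choi_map)
qed

lemma op_norm_ptrace_AB_choi_transform_le:
  assumes A: "qchannel A" and C: "lin_map C" "trace_pres C" and Q: "psd Q"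
  shows "op_norm_inf (ptrace_AB (choi_transform A C Q)) \<le> op_norm_inf (ptrace_AB Q)"
proof (rule op_norm_inf_le_if_psd)
  define c where "c = op_norm_inf (ptrace_AB Q)"
  define G where "G = ptrace_AB (choi_transform A C Q)"
  have lin_A: "lin_map A" and psd_A: "\<And>X. psd X \<Longrightarrow> psd (A X)"
    using A compl_pos_imp_psd unfolding qchannel_def by auto
  have P: "psd (ptrace_AB Q)" and cP: "psd (\<lambda>i j. complex_of_real c * id_op i j - ptrace_AB Q i j)"
    unfolding c_def using psd_ptrace_AB[OF Q] by (auto intro: psd_op_norm_id_minus)
  have bounds: "0 \<le> sesq_form G w w \<and> sesq_form G w w \<le> complex_of_real (c * vec_norm2 w)" for w
  proof -
    define Z where "Z = A (\<lambda>L L'. cnj (w L) * w L')"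
    have Z: "psd Z"
      unfolding Z_def using psd_A psd_rank_one[of "\<lambda>L. cnj (w L)"] by simp
    have G: "sesq_form G w w = (\<Sum>m\<in>UNIV. \<Sum>n\<in>UNIV. trace_pairing (diag_block Z m n) (ptrace_AB Q))"
      unfolding G_def Z_def by (rule sesq_form_ptrace_AB_choi_transform[OF lin_A C])
    have "(\<Sum>m\<in>UNIV. \<Sum>n\<in>UNIV. trace_pairing (diag_block Z m n) (ptrace_AB Q)) \<le>
        (\<Sum>m\<in>UNIV. \<Sum>n\<in>UNIV. complex_of_real c * trace_op (diag_block Z m n))"
      by (intro sum_mono trace_pairing_le psd_diag_block Z cP)
    also have "\<dots> = complex_of_real c * trace_op Z"
      by (simp add: trace_op_diag_blocks[of Z] sum_distrib_left)
    also have "trace_op Z = complex_of_real (vec_norm2 w)"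
      using A unfolding Z_def qchannel_def trace_pres_def by (simp add: trace_rank_one)
    finally show ?thesis
      unfolding G by (auto intro!: sum_nonneg trace_pairing_nonneg psd_diag_block Z P)
  qed
  show G: "psd G"
    unfolding psd_iff_sesq_form_nonneg using bounds by blast
  show "psd (\<lambda>i j. complex_of_real c * id_op i j - G i j)"
    unfolding psd_scaled_id_minus_iff[OF G] using bounds by (simp add: less_eq_complex_def)
  show "0 \<le> c"
    unfolding c_def by (rule op_norm_inf_nonneg)
qed

section \<open>The \<open>\<kappa>\<close>-entanglement program\<close>

definition kappa_feasible ::
  "((('ai::finite) \<times> ('bi::finite)) op \<Rightarrow> (('ao::finite) \<times> ('bo::finite)) op) \<Rightarrow>
   (('ai \<times> 'ao) \<times> ('bo \<times> 'bi)) op \<Rightarrow> bool" where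
  "kappa_feasible N Q \<longleftrightarrow> psd Q \<and>
     op_le (op_uminus (ptrans2 Q)) (ptrans2 (choi_bip N)) \<and> op_le (ptrans2 (choi_bip N)) (ptrans2 Q)"

lemma Gamma_kappa_eq_Inf: "Gamma_kappa N = Inf {op_norm_inf (ptrace_AB Q) | Q. kappa_feasible N Q}"
  unfolding Gamma_kappa_def kappa_feasible_def ..

lemma kappa_feasible_iff:
  "kappa_feasible N Q \<longleftrightarrow> psd Q \<and>
     psd (ptrans2 (\<lambda>z z'. choi_bip N z z' + Q z z')) \<and> psd (ptrans2 (\<lambda>z z'. Q z z' - choi_bip N z z'))"
  unfolding kappa_feasible_def op_le_def op_uminus_def ptrans2_add ptrans2_diff by simp

lemma kappa_feasible_choi_transform:
  assumes M: "lin_map M" and A: "cppt_pres A" and C: "cppt_pres C" and Q: "kappa_feasible M Q"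
  shows "kappa_feasible (superch A C M) (choi_transform A C Q)"
proof -
  have lin_A: "lin_map A" and CP_A: "compl_pos A" and lin_C: "lin_map C" and CP_C: "compl_pos C"
    using A C unfolding cppt_pres_def qchannel_def by auto
  let ?\<Theta> = "choi_transform A C" and ?J = "choi_bip M"
  have lin: "lin_map ?\<Theta>" by (rule lin_map_choi_transform[OF lin_C])
  have "psd (ptrans2 (?\<Theta> (\<lambda>z z'. ?J z z' + Q z z')))"
    and "psd (ptrans2 (?\<Theta> (\<lambda>z z'. Q z z' - ?J z z')))"
    using Q unfolding kappa_feasible_iff by (auto intro: psd_ptrans2_choi_transform A C)
  moreover have "psd (?\<Theta> Q)"
    using Q unfolding kappa_feasible_def by (intro psd_choi_transform lin_A CP_A lin_C CP_C) simp
  ultimately show ?thesis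
    unfolding kappa_feasible_iff choi_transform_choi_bip[OF M, symmetric]
    by (simp add: lin_map_add[OF lin] lin_map_diff[OF lin])
qed

text \<open>The witness \<open>Q = \<parallel>T(J)\<parallel> \<cdot> 1\<close> is invariant under partial transposition and
  dominates \<open>\<plusminus>T(J)\<close>, which is Hermitian.\<close>

lemma kappa_feasible_exists:
  fixes M :: "(('ai::finite) \<times> ('bi::finite)) op \<Rightarrow> (('ao::finite) \<times> ('bo::finite)) op"
  assumes "compl_pos M"
  shows "\<exists>Q. kappa_feasible M Q"
proof -
  define H where "H = ptrans2 (choi_bip M)"
  have "hermitian H"
    unfolding H_def using assms
    by (intro hermitian_ptrans2 psd_imp_hermitian psd_choi_bip) (simp add: compl_pos_def psd_upsilon_op)
  define c where "c = op_norm_inf H"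
  define Q :: "(('ai \<times> 'ao) \<times> ('bo \<times> 'bi)) op" where "Q = (\<lambda>i j. complex_of_real c * id_op i j)"
  have sesq_Q: "sesq_form Q w w = complex_of_real (c * vec_norm2 w)" for w
    unfolding Q_def sesq_form_scale sesq_form_id_op_self by simp
  have H_bound: "\<bar>Re (sesq_form H w w)\<bar> \<le> c * vec_norm2 w" for w
    using abs_Re_le_cmod sesq_form_le_op_norm_inf unfolding c_def by (blast intro: order_trans)
  have Q_plus_H: "0 \<le> sesq_form (\<lambda>i j. H i j + Q i j) w w"
    and Q_minus_H: "0 \<le> sesq_form (\<lambda>i j. Q i j - H i j) w w" for w
    using H_bound[of w] hermitian_sesq_form_real[OF \<open>hermitian H\<close>, of w]
    by (simp_all add: sesq_form_add sesq_form_diff sesq_Q less_eq_complex_def abs_le_iff)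
  have "ptrans2 Q = Q"
    unfolding Q_def ptrans2_def id_op_def by (auto simp: fun_eq_iff)
  moreover have "psd Q"
    unfolding Q_def c_def by (intro psd_scale op_norm_inf_nonneg psd_id_op)
  moreover have "psd (\<lambda>i j. H i j - op_uminus Q i j)" and "psd (\<lambda>i j. Q i j - H i j)"
    unfolding psd_iff_sesq_form_nonneg op_uminus_def using Q_plus_H Q_minus_H by simp_all
  ultimately have "kappa_feasible M Q"
    unfolding kappa_feasible_def op_le_def H_def[symmetric] by simp
  then show ?thesis by blast
qed

text \<open>For a trace-preserving \<open>N\<close>, \<open>Tr\<^sub>A\<^sub>B J\<close> has unit diagonal, and \<open>T(Q) \<ge> T(J)\<close> compares
  diagonals, which partial transposition leaves unchanged.\<close>

lemma kappa_feasible_norm_ge_one: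
  fixes N :: "(('ai::finite) \<times> ('bi::finite)) op \<Rightarrow> (('ao::finite) \<times> ('bo::finite)) op"
  assumes N: "trace_pres N" and Q: "kappa_feasible N Q"
  shows "1 \<le> op_norm_inf (ptrace_AB Q)"
proof -
  fix l :: 'ai and m :: 'bi
  have D: "psd (\<lambda>i j. ptrans2 Q i j - ptrans2 (choi_bip N) i j)"
    using Q unfolding kappa_feasible_def op_le_def by blast
  have "choi_bip N z z \<le> Q z z" for z
    using psd_sesq_form_nonneg[OF D, of "basis_vec z"] by (simp add: ptrans2_diag)
  then have "ptrace_AB (choi_bip N) (l, m) (l, m) \<le> ptrace_AB Q (l, m) (l, m)"
    unfolding ptrace_AB_def by (simp add: sum_mono)
  moreover have "ptrace_AB (choi_bip N) (l, m) (l, m) = 1"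
    using N unfolding ptrace_AB_choi_bip trace_pres_def by (simp add: trace_op_def matrix_unit_def)
  ultimately have "1 \<le> Re (ptrace_AB Q (l, m) (l, m))"
    by (simp add: less_eq_complex_def)
  also have "\<dots> \<le> op_norm_inf (ptrace_AB Q)"
    using complex_Re_le_cmod op_norm_inf_diag order_trans by blast
  finally show ?thesis .
qed

lemma cppt_pres_imp_qchannel: "cppt_pres N \<Longrightarrow> qchannel N"
  unfolding cppt_pres_def by simp

lemma Gamma_kappa_ge_one:
  assumes "trace_pres N" "kappa_feasible N Q"
  shows "1 \<le> Gamma_kappa N"
  unfolding Gamma_kappa_eq_Inf
  using assms by (auto intro!: cInf_greatest kappa_feasible_norm_ge_one)

lemma Gamma_kappa_superch_le:
  assumes M: "qchannel M" and A: "cppt_pres A" and C: "cppt_pres C"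
  shows "Gamma_kappa (superch A C M) \<le> Gamma_kappa M"
  unfolding Gamma_kappa_eq_Inf
proof (rule cInf_mono)
  show "{op_norm_inf (ptrace_AB Q) | Q. kappa_feasible M Q} \<noteq> {}"
    using kappa_feasible_exists M unfolding qchannel_def by blast
  show "bdd_below {op_norm_inf (ptrace_AB Q) | Q. kappa_feasible (superch A C M) Q}"
    by (rule bdd_belowI[of _ 0]) (auto simp: op_norm_inf_nonneg)
  fix x
  assume "x \<in> {op_norm_inf (ptrace_AB Q) | Q. kappa_feasible M Q}"
  then obtain Q where x: "x = op_norm_inf (ptrace_AB Q)" and Q: "kappa_feasible M Q"
    by blast
  have "kappa_feasible (superch A C M) (choi_transform A C Q)"
    using M A C Q unfolding qchannel_def by (intro kappa_feasible_choi_transform) auto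
  moreover have "op_norm_inf (ptrace_AB (choi_transform A C Q)) \<le> x"
    using cppt_pres_imp_qchannel[OF C] Q unfolding x qchannel_def kappa_feasible_def
    by (intro op_norm_ptrace_AB_choi_transform_le cppt_pres_imp_qchannel[OF A]) auto
  ultimately show "\<exists>y\<in>{op_norm_inf (ptrace_AB Q) | Q. kappa_feasible (superch A C M) Q}. y \<le> x"
    by blast
qed

theorem mainTheorem10:
  fixes M :: "(('ahi::finite) \<times> ('bhi::finite)) op \<Rightarrow> (('aho::finite) \<times> ('bho::finite)) op"
    and Ppre :: "(('ai::finite) \<times> ('bi::finite)) op \<Rightarrow> (('ahi \<times> ('am::finite)) \<times> ('bhi \<times> ('bm::finite))) op"
    and Ppost :: "(('am \<times> 'aho) \<times> ('bho \<times> 'bm)) op \<Rightarrow> (('ao::finite) \<times> ('bo::finite)) op"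
  assumes "qchannel M"
    and "cppt_pres Ppre"
    and "cppt_pres Ppost"
  shows "E_kappa M \<ge> E_kappa (superch Ppre Ppost M)"
proof -
  have M: "lin_map M" "compl_pos M" "trace_pres M"
    using assms(1) unfolding qchannel_def by auto
  obtain Q where Q: "kappa_feasible M Q"
    using kappa_feasible_exists[OF M(2)] by blast
  have "trace_pres (superch Ppre Ppost M)"
    using cppt_pres_imp_qchannel[OF assms(2)] cppt_pres_imp_qchannel[OF assms(3)] M(3)
    unfolding qchannel_def by (intro trace_pres_superch) auto
  from Gamma_kappa_ge_one[OF this kappa_feasible_choi_transform[OF M(1) assms(2,3) Q]]
  have "1 \<le> Gamma_kappa (superch Ppre Ppost M)" .
  moreover have "Gamma_kappa (superch Ppre Ppost M) \<le> Gamma_kappa M"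
    using assms by (rule Gamma_kappa_superch_le)
  ultimately show ?thesis
    unfolding E_kappa_def by simp
qed

end
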